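(* The Krull dimension of $\mathcal{S}'(\mathbb{Z}^{d})$ is infinite: for every $N\in\mathbb{N}$ there exist prime ideals $\mathfrak{p}_{N+1}\subsetneq\mathfrak{p}_N\subsetneq\cdots\subsetneq\mathfrak{p}_1$ of $\mathcal{S}'(\mathbb{Z}^{d})$, all proper.
   Context: For $\mathbf{n}=(n_1,\dots,n_d)\in\mathbb{Z}^d$ write $\|\mathbf{n}\|:=|n_1|+\cdots+|n_d|$. $\mathcal{S}'(\mathbb{Z}^{d})$ denotes the set of all maps $f:\mathbb{Z}^d\to\mathbb{C}$ of at most polynomial growth, i.e. for which there exist a real $M>0$ and an integer $m\geq 0$ with $|f(\mathbf{n})|\leq M(1+\|\mathbf{n}\|)^m$ for all $\mathbf{n}\in\mathbb{Z}^d$. It is a commutative unital ring under pointwise addition and multiplication. The Krull dimension of a commutative ring is the supremum of the lengths of chains of distinct proper prime ideals. *)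

theory Defs
  imports Complex_Main "HOL-Algebra.Ideal"
begin

text \<open>Points of Z^d are modelled as functions from a finite index type 'd
  (with d = CARD('d) \<ge> 1) to int; the l1 norm is the sum of absolute values.\<close>

definition l1norm :: "('d::finite \<Rightarrow> int) \<Rightarrow> int" where
  "l1norm n = (\<Sum>i\<in>UNIV. \<bar>n i\<bar>)"

definition tempered :: "(('d::finite \<Rightarrow> int) \<Rightarrow> complex) set" where
  "tempered = {f. \<exists>M::real. M > 0 \<and> (\<exists>m::nat. \<forall>n.
      cmod (f n) \<le> M * (1 + real_of_int (l1norm n)) ^ m)}"

definition S_ring :: "(('d::finite \<Rightarrow> int) \<Rightarrow> complex) ring" where
  "S_ring = \<lparr>carrier = tempered, monoid.mult = (\<lambda>f g x. f x * g x),
     one = (\<lambda>x. 1), zero = (\<lambda>x. 0), add = (\<lambda>f g x. f x + g x)\<rparr>"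

end

theory Submission
  imports Defs
begin

text \<open>Fix a free ultrafilter \<open>U\<close> on \<open>\<nat>\<close>, the points \<open>k e\<^sub>1\<close> of \<open>\<int>\<^sup>d\<close>, and \<open>L\<^sub>k = ln (k + 3)\<close>.
  For \<open>j \<ge> 1\<close> let \<open>P\<^sub>j\<close> consist of the tempered \<open>f\<close> such that for every \<open>c > 0\<close> the bound
  \<open>|f (k e\<^sub>1)| \<le> exp (- c L\<^sub>k\<^sup>j)\<close> holds for \<open>U\<close>-almost all \<open>k\<close>. Along these points a tempered
  function grows at most like \<open>exp (C L\<^sub>k)\<close>, so \<open>P\<^sub>j\<close> is an ideal. It is prime because \<open>U\<close> is
  an ultrafilter: if \<open>f\<close> fails the bound for \<open>c\<^sub>1\<close> and \<open>g\<close> for \<open>c\<^sub>2\<close>, both failures occur on a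
  common \<open>U\<close>-large set, where \<open>f g\<close> fails the bound for \<open>c\<^sub>1 + c\<^sub>2\<close>. Since \<open>L\<^sub>k \<ge> 1\<close> the ideals
  decrease in \<open>j\<close>, and \<open>y \<mapsto> exp (- ln (\<parallel>y\<parallel> + 3)\<^sup>j\<^sup>+\<^sup>1)\<close> lies in \<open>P\<^sub>j\<close> but not in \<open>P\<^sub>j\<^sub>+\<^sub>1\<close>.\<close>

lemma l1norm_nonneg: "0 \<le> l1norm n"
  unfolding l1norm_def by (simp add: sum_nonneg)

lemma temperedI:
  "M > 0 \<Longrightarrow> (\<And>n. cmod (f n) \<le> M * (1 + real_of_int (l1norm n)) ^ m) \<Longrightarrow> f \<in> tempered"
  unfolding tempered_def by blast

lemma tempered_add:
  fixes f g :: "('d::finite \<Rightarrow> int) \<Rightarrow> complex"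
  assumes "f \<in> tempered" "g \<in> tempered"
  shows "(\<lambda>x. f x + g x) \<in> tempered"
proof -
  obtain M1 m1 where M1: "M1 > 0" "\<And>n. cmod (f n) \<le> M1 * (1 + real_of_int (l1norm n)) ^ m1"
    using assms(1) unfolding tempered_def by blast
  obtain M2 m2 where M2: "M2 > 0" "\<And>n. cmod (g n) \<le> M2 * (1 + real_of_int (l1norm n)) ^ m2"
    using assms(2) unfolding tempered_def by blast
  show ?thesis
  proof (rule temperedI[of "M1 + M2" _ "max m1 m2"])
    show "M1 + M2 > 0" using M1 M2 by simp
    fix n :: "'d \<Rightarrow> int"
    let ?b = "1 + real_of_int (l1norm n)"
    have "?b \<ge> 1" using l1norm_nonneg[of n] by simp
    then have "M1 * ?b ^ m1 \<le> M1 * ?b ^ max m1 m2" "M2 * ?b ^ m2 \<le> M2 * ?b ^ max m1 m2"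
      using M1(1) M2(1) by (auto intro!: mult_left_mono power_increasing)
    then show "cmod (f n + g n) \<le> (M1 + M2) * ?b ^ max m1 m2"
      using norm_triangle_ineq[of "f n" "g n"] M1(2)[of n] M2(2)[of n] by (simp add: distrib_right)
  qed
qed

lemma tempered_mult:
  fixes f g :: "('d::finite \<Rightarrow> int) \<Rightarrow> complex"
  assumes "f \<in> tempered" "g \<in> tempered"
  shows "(\<lambda>x. f x * g x) \<in> tempered"
proof -
  obtain M1 m1 where M1: "M1 > 0" "\<And>n. cmod (f n) \<le> M1 * (1 + real_of_int (l1norm n)) ^ m1"
    using assms(1) unfolding tempered_def by blast
  obtain M2 m2 where M2: "M2 > 0" "\<And>n. cmod (g n) \<le> M2 * (1 + real_of_int (l1norm n)) ^ m2"
    using assms(2) unfolding tempered_def by blast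
  show ?thesis
  proof (rule temperedI[of "M1 * M2" _ "m1 + m2"])
    show "M1 * M2 > 0" using M1 M2 by simp
    fix n :: "'d \<Rightarrow> int"
    have "cmod (f n * g n) \<le> (M1 * (1 + real_of_int (l1norm n)) ^ m1) * (M2 * (1 + real_of_int (l1norm n)) ^ m2)"
      unfolding norm_mult using M1 M2(2)[of n] l1norm_nonneg[of n] by (intro mult_mono) auto
    then show "cmod (f n * g n) \<le> M1 * M2 * (1 + real_of_int (l1norm n)) ^ (m1 + m2)"
      by (simp add: power_add algebra_simps)
  qed
qed

lemma tempered_uminus: "f \<in> tempered \<Longrightarrow> (\<lambda>x. - f x) \<in> tempered"
  unfolding tempered_def by simp

lemma tempered_bounded:
  assumes "\<And>x. cmod (f x) \<le> B"
  shows "f \<in> tempered"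
proof (rule temperedI[of "\<bar>B\<bar> + 1" _ 0])
  show "\<bar>B\<bar> + 1 > 0" by simp
  show "cmod (f n) \<le> (\<bar>B\<bar> + 1) * (1 + real_of_int (l1norm n)) ^ 0" for n
    using assms[of n] by simp
qed

lemma tempered_const: "(\<lambda>x. c) \<in> tempered"
  by (rule tempered_bounded[of _ "cmod c"]) simp

lemma tempered_le_exp:
  assumes "f \<in> tempered"
  obtains C where "C > 0"
    "\<And>n s. 1 \<le> s \<Longrightarrow> ln (1 + real_of_int (l1norm n)) \<le> s \<Longrightarrow> cmod (f n) \<le> exp (C * s)"
proof -
  obtain M m where M: "M > 0" and f_le: "\<And>n. cmod (f n) \<le> M * (1 + real_of_int (l1norm n)) ^ m"
    using assms unfolding tempered_def by blast
  have "cmod (f n) \<le> exp ((M + real m) * s)"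
    if s: "1 \<le> s" "ln (1 + real_of_int (l1norm n)) \<le> s" for n s
  proof -
    have "M \<le> exp M" using exp_ge_add_one_self[of M] by linarith
    also have "\<dots> \<le> exp (M * s)" using M s(1) by simp
    finally have M_le: "M \<le> exp (M * s)" .
    have "(1 + real_of_int (l1norm n)) ^ m = exp (real m * ln (1 + real_of_int (l1norm n)))"
      using l1norm_nonneg[of n] by (simp add: exp_of_nat_mult)
    also have "\<dots> \<le> exp (real m * s)" using s(2) by (simp add: mult_left_mono)
    finally have "(1 + real_of_int (l1norm n)) ^ m \<le> exp (real m * s)" .
    with M_le M l1norm_nonneg[of n]
    have "M * (1 + real_of_int (l1norm n)) ^ m \<le> exp (M * s) * exp (real m * s)"
      by (intro mult_mono) auto
    then show ?thesis using f_le[of n] by (simp add: distrib_right exp_add)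
  qed
  then show thesis using that M by (meson add_pos_nonneg of_nat_0_le_iff)
qed

lemma cring_S_ring: "cring S_ring"
proof (rule cringI)
  show "abelian_group S_ring"
    by (rule abelian_groupI)
      (auto simp: S_ring_def tempered_add tempered_const algebra_simps
        intro!: bexI[of _ "\<lambda>x. - _ x"] tempered_uminus)
  show "comm_monoid S_ring"
    by (rule comm_monoidI) (auto simp: S_ring_def tempered_mult tempered_const algebra_simps)
qed (auto simp: S_ring_def algebra_simps)

lemma a_inv_S_ring: "f \<in> tempered \<Longrightarrow> \<ominus>\<^bsub>S_ring\<^esub> f = (\<lambda>x. - f x)"
  by (rule abelian_group.minus_equality[OF ring.is_abelian_group[OF cring.axioms(1)[OF cring_S_ring]]])
    (auto simp: S_ring_def tempered_uminus)

lemma ideal_S_ringI: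
  assumes sub: "I \<subseteq> tempered" and zero: "(\<lambda>x. 0) \<in> I"
    and add: "\<And>f g. f \<in> I \<Longrightarrow> g \<in> I \<Longrightarrow> (\<lambda>x. f x + g x) \<in> I"
    and mult: "\<And>f g. f \<in> I \<Longrightarrow> g \<in> tempered \<Longrightarrow> (\<lambda>x. g x * f x) \<in> I"
  shows "ideal I S_ring"
proof (rule idealI)
  show "ring S_ring" using cring_S_ring by (rule cring.axioms(1))
  show "subgroup I (add_monoid S_ring)"
  proof (rule subgroup.intro)
    show "I \<subseteq> carrier (add_monoid S_ring)" using sub by (simp add: S_ring_def)
    show "\<one>\<^bsub>add_monoid S_ring\<^esub> \<in> I" using zero by (simp add: S_ring_def)
    show "f \<otimes>\<^bsub>add_monoid S_ring\<^esub> g \<in> I" if "f \<in> I" "g \<in> I" for f g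
      using add[OF that] by (simp add: S_ring_def)
    show "inv\<^bsub>add_monoid S_ring\<^esub> f \<in> I" if f: "f \<in> I" for f
      using mult[OF f tempered_const[of "-1"]] a_inv_S_ring[of f] f sub
      unfolding a_inv_def by auto
  qed
  show "x \<otimes>\<^bsub>S_ring\<^esub> f \<in> I" "f \<otimes>\<^bsub>S_ring\<^esub> x \<in> I"
    if "f \<in> I" "x \<in> carrier S_ring" for f x
    using mult[of f x] that by (simp_all add: S_ring_def mult.commute)
qed

lemma primeideal_S_ringI:
  assumes "ideal I S_ring" and "(\<lambda>x. 1) \<notin> I"
    and "\<And>f g. f \<in> tempered \<Longrightarrow> g \<in> tempered \<Longrightarrow> (\<lambda>x. f x * g x) \<in> I \<Longrightarrow> f \<in> I \<or> g \<in> I"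
  shows "primeideal I S_ring"
  using assms tempered_const[of 1] by (intro primeidealI cring_S_ring) (auto simp: S_ring_def)

definition ultrafilter :: "'a filter \<Rightarrow> bool" where
  "ultrafilter F \<longleftrightarrow> F \<noteq> bot \<and> (\<forall>P. eventually P F \<or> eventually (\<lambda>x. \<not> P x) F)"

lemma ultrafilter_if_maximal:
  assumes "F \<noteq> bot" and max: "\<And>G. G \<noteq> bot \<Longrightarrow> G \<le> F \<Longrightarrow> G = F"
  shows "ultrafilter F"
  unfolding ultrafilter_def
proof (intro conjI allI assms(1) disjCI)
  fix P
  assume "\<not> eventually (\<lambda>x. \<not> P x) F"
  then have "inf F (principal {x. P x}) \<noteq> bot"
    by (simp add: trivial_limit_def eventually_inf_principal)
  then have "inf F (principal {x. P x}) = F" by (rule max) simp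
  moreover have "eventually P (inf F (principal {x. P x}))"
    by (simp add: eventually_inf_principal)
  ultimately show "eventually P F" by simp
qed

lemma ultrafilter_exists:
  assumes "F \<noteq> bot"
  obtains U where "U \<le> F" "ultrafilter U"
proof -
  define A where "A = {G. G \<noteq> bot \<and> G \<le> F}"
  have "\<exists>U\<in>A. \<forall>G\<in>A. G \<le> U \<longrightarrow> G = U"
  proof (rule predicate_Zorn)
    show "partial_order_on A (relation_of (\<lambda>G H. H \<le> G) A)"
      by (rule partial_order_on_relation_ofI) auto
    fix C
    assume C: "C \<in> Chains (relation_of (\<lambda>G H. H \<le> G) A)"
    then have CA: "C \<subseteq> A" by (rule Chains_relation_of)
    have total: "G \<le> H \<or> H \<le> G" if "G \<in> C" "H \<in> C" for G H
      using C that unfolding Chains_def relation_of_def by auto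
    show "\<exists>U\<in>A. \<forall>G\<in>C. U \<le> G"
    proof (cases "C = {}")
      case True
      then show ?thesis using assms unfolding A_def by auto
    next
      case False
      have "eventually P (Inf C) \<longleftrightarrow> (\<exists>G\<in>C. eventually P G)" for P
      proof (rule eventually_Inf_base[OF False])
        show "\<exists>K\<in>C. K \<le> inf G H" if "G \<in> C" "H \<in> C" for G H
          using total[OF that] that by (metis inf.absorb1 inf.absorb2 order_refl)
      qed
      then have "Inf C \<noteq> bot"
        using CA unfolding A_def by (auto simp flip: eventually_False)
      moreover have "Inf C \<le> F"
        using False CA unfolding A_def by (auto intro: Inf_lower2)
      ultimately show ?thesis unfolding A_def by (auto intro: Inf_lower)
    qed
  qed
  then obtain U where U: "U \<noteq> bot" "U \<le> F"
    and max: "\<And>G. G \<noteq> bot \<Longrightarrow> G \<le> F \<Longrightarrow> G \<le> U \<Longrightarrow> G = U"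
    unfolding A_def by blast
  have "ultrafilter U"
    using U(1) by (rule ultrafilter_if_maximal) (meson U(2) max order_trans)
  with U(2) show thesis by (rule that)
qed

definition decay_ideal ::
    "'a filter \<Rightarrow> ('a \<Rightarrow> 'd::finite \<Rightarrow> int) \<Rightarrow> ('a \<Rightarrow> real) \<Rightarrow> (('d \<Rightarrow> int) \<Rightarrow> complex) set" where
  "decay_ideal F x w =
     {f \<in> tempered. \<forall>c>0. eventually (\<lambda>k. cmod (f (x k)) \<le> exp (- c * w k)) F}"

lemma decay_idealI:
  "f \<in> tempered \<Longrightarrow> (\<And>c. c > 0 \<Longrightarrow> eventually (\<lambda>k. cmod (f (x k)) \<le> exp (- c * w k)) F)
    \<Longrightarrow> f \<in> decay_ideal F x w"
  unfolding decay_ideal_def by blast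

lemma decay_idealD:
  assumes "f \<in> decay_ideal F x w"
  shows decay_ideal_tempered: "f \<in> tempered"
    and decay_ideal_eventually: "c > 0 \<Longrightarrow> eventually (\<lambda>k. cmod (f (x k)) \<le> exp (- c * w k)) F"
  using assms unfolding decay_ideal_def by blast+

lemma two_exp_minus_le_one: "1 \<le> s \<Longrightarrow> 2 * exp (- s) \<le> (1::real)"
proof -
  assume "1 \<le> s"
  then have "2 * exp (- s) \<le> 2 * exp (- 1)" by simp
  also have "\<dots> \<le> 1" using exp_ge_add_one_self[of 1] by (simp add: exp_minus field_simps)
  finally show ?thesis .
qed

lemma decay_ideal_ideal:
  fixes x :: "'a \<Rightarrow> 'd::finite \<Rightarrow> int"
  assumes w_ge_1: "\<And>k. 1 \<le> w k"
    and w_ge_ln: "\<And>k. ln (1 + real_of_int (l1norm (x k))) \<le> w k"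
  shows "ideal (decay_ideal F x w) S_ring"
proof (rule ideal_S_ringI)
  show "decay_ideal F x w \<subseteq> tempered" by (auto dest: decay_ideal_tempered)
  show "(\<lambda>_. 0) \<in> decay_ideal F x w" by (intro decay_idealI tempered_const) simp
next
  fix f g :: "('d \<Rightarrow> int) \<Rightarrow> complex"
  assume f: "f \<in> decay_ideal F x w" and g: "g \<in> decay_ideal F x w"
  show "(\<lambda>y. f y + g y) \<in> decay_ideal F x w"
  proof (rule decay_idealI)
    show "(\<lambda>y. f y + g y) \<in> tempered"
      using f g by (intro tempered_add decay_ideal_tempered)
    fix c :: real
    assume "c > 0"
    then have "c + 1 > 0" by simp
    from decay_ideal_eventually[OF f this] decay_ideal_eventually[OF g this]
    show "eventually (\<lambda>k. cmod (f (x k) + g (x k)) \<le> exp (- c * w k)) F"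
    proof eventually_elim
      case (elim k)
      have "cmod (f (x k) + g (x k)) \<le> 2 * exp (- (c + 1) * w k)"
        using norm_triangle_ineq[of "f (x k)" "g (x k)"] elim by simp
      also have "\<dots> = (2 * exp (- w k)) * exp (- c * w k)"
        by (simp add: algebra_simps flip: exp_add)
      also have "\<dots> \<le> exp (- c * w k)"
        using two_exp_minus_le_one[OF w_ge_1] by (simp add: mult_left_le_one_le)
      finally show ?case .
    qed
  qed
next
  fix f g :: "('d \<Rightarrow> int) \<Rightarrow> complex"
  assume f: "f \<in> decay_ideal F x w" and g: "g \<in> tempered"
  obtain C where C: "C > 0"
    "\<And>n s. 1 \<le> s \<Longrightarrow> ln (1 + real_of_int (l1norm n)) \<le> s \<Longrightarrow> cmod (g n) \<le> exp (C * s)"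
    using tempered_le_exp[OF g] by blast
  show "(\<lambda>y. g y * f y) \<in> decay_ideal F x w"
  proof (rule decay_idealI)
    show "(\<lambda>y. g y * f y) \<in> tempered"
      using f g by (intro tempered_mult[OF g decay_ideal_tempered])
    fix c :: real
    assume "c > 0"
    with C(1) have "c + C > 0" by simp
    from decay_ideal_eventually[OF f this]
    show "eventually (\<lambda>k. cmod (g (x k) * f (x k)) \<le> exp (- c * w k)) F"
    proof eventually_elim
      case (elim k)
      have "cmod (g (x k) * f (x k)) \<le> exp (C * w k) * exp (- (c + C) * w k)"
        unfolding norm_mult using C(2)[OF w_ge_1 w_ge_ln] elim by (intro mult_mono) auto
      also have "\<dots> = exp (- c * w k)" by (simp add: algebra_simps flip: exp_add)
      finally show ?case .
    qed
  qed
qed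

lemma decay_ideal_prime:
  fixes x :: "'a \<Rightarrow> 'd::finite \<Rightarrow> int"
  assumes "ultrafilter F"
    and w_ge_1: "\<And>k. 1 \<le> w k"
    and w_ge_ln: "\<And>k. ln (1 + real_of_int (l1norm (x k))) \<le> w k"
  shows "primeideal (decay_ideal F x w) S_ring"
proof (rule primeideal_S_ringI[OF decay_ideal_ideal[OF w_ge_1 w_ge_ln]])
  from assms(1) have nontrivial: "F \<noteq> bot"
    and ultra: "\<And>P. \<not> eventually P F \<Longrightarrow> eventually (\<lambda>k. \<not> P k) F"
    unfolding ultrafilter_def by auto
  show "(\<lambda>_. 1) \<notin> decay_ideal F x w"
  proof
    assume "(\<lambda>_. 1) \<in> decay_ideal F x w"
    from decay_ideal_eventually[OF this, of 1]
    have "eventually (\<lambda>k. 1 \<le> exp (- w k)) F" by simp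
    then have "eventually (\<lambda>k. False) F"
    proof eventually_elim
      case (elim k)
      with w_ge_1[of k] show False by simp
    qed
    with nontrivial show False by simp
  qed
  fix f g :: "('d \<Rightarrow> int) \<Rightarrow> complex"
  assume f: "f \<in> tempered" and g: "g \<in> tempered"
    and fg: "(\<lambda>y. f y * g y) \<in> decay_ideal F x w"
  show "f \<in> decay_ideal F x w \<or> g \<in> decay_ideal F x w"
  proof (rule ccontr)
    assume "\<not> ?thesis"
    then have "f \<notin> decay_ideal F x w" "g \<notin> decay_ideal F x w" by auto
    then obtain c1 c2 :: real where c: "c1 > 0" "c2 > 0"
      and "\<not> eventually (\<lambda>k. cmod (f (x k)) \<le> exp (- c1 * w k)) F"
      and "\<not> eventually (\<lambda>k. cmod (g (x k)) \<le> exp (- c2 * w k)) F"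
      using decay_idealI[OF f] decay_idealI[OF g] by blast
    then have "eventually (\<lambda>k. \<not> cmod (f (x k)) \<le> exp (- c1 * w k)) F"
      and "eventually (\<lambda>k. \<not> cmod (g (x k)) \<le> exp (- c2 * w k)) F"
      by (simp_all add: ultra)
    moreover have "eventually (\<lambda>k. cmod (f (x k) * g (x k)) \<le> exp (- (c1 + c2) * w k)) F"
      using decay_ideal_eventually[OF fg, of "c1 + c2"] c by simp
    ultimately have "eventually (\<lambda>k. False) F"
    proof eventually_elim
      case (elim k)
      have "exp (- (c1 + c2) * w k) = exp (- c1 * w k) * exp (- c2 * w k)"
        by (simp add: algebra_simps flip: exp_add)
      also have "\<dots> < cmod (f (x k) * g (x k))"
        unfolding norm_mult using elim(1,2) by (intro mult_strict_mono) (auto simp: not_le)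
      finally show False using elim(3) by simp
    qed
    with nontrivial show False by simp
  qed
qed

lemma decay_ideal_antimono:
  assumes "\<And>k. w k \<le> w' k"
  shows "decay_ideal F x w' \<subseteq> decay_ideal F x w"
proof
  fix f
  assume f: "f \<in> decay_ideal F x w'"
  show "f \<in> decay_ideal F x w"
  proof (rule decay_idealI)
    show "f \<in> tempered" using f by (rule decay_ideal_tempered)
    fix c :: real
    assume c: "c > 0"
    from decay_ideal_eventually[OF f c]
    show "eventually (\<lambda>k. cmod (f (x k)) \<le> exp (- c * w k)) F"
    proof eventually_elim
      case (elim k)
      have "exp (- c * w' k) \<le> exp (- c * w k)" using assms[of k] c by simp
      with elim show ?case by linarith
    qed
  qed
qed

text \<open>\<open>undefined\<close> only serves to single out some coordinate; any index would do.\<close>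

definition axis_point :: "nat \<Rightarrow> 'd::finite \<Rightarrow> int" where
  "axis_point k = (\<lambda>i. if i = undefined then int k else 0)"

lemma l1norm_axis_point: "l1norm (axis_point k :: 'd::finite \<Rightarrow> int) = int k"
proof -
  have "\<bar>axis_point k i\<bar> = axis_point k i" for i :: 'd
    by (simp add: axis_point_def)
  then show ?thesis unfolding l1norm_def by (simp add: axis_point_def)
qed

definition log_weight :: "nat \<Rightarrow> nat \<Rightarrow> real" where
  "log_weight j k = ln (real k + 3) ^ j"

lemma one_le_ln_plus_3: "1 \<le> ln (real k + 3)"
proof -
  have "exp 1 \<le> (3::real)" using exp_le by simp
  also have "\<dots> \<le> real k + 3" by simp
  finally show ?thesis by (subst ln_ge_iff) auto
qed

lemma log_weight_ge_1: "1 \<le> log_weight j k"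
  unfolding log_weight_def using one_le_ln_plus_3 by simp

lemma ln_norm_axis_point_le_log_weight:
  assumes "1 \<le> j"
  shows "ln (1 + real_of_int (l1norm (axis_point k :: 'd::finite \<Rightarrow> int))) \<le> log_weight j k"
proof -
  have "ln (1 + real_of_int (l1norm (axis_point k :: 'd \<Rightarrow> int))) \<le> ln (real k + 3)"
    by (simp add: l1norm_axis_point)
  also have "\<dots> \<le> log_weight j k"
    unfolding log_weight_def
    using power_increasing[OF assms one_le_ln_plus_3[of k]] by simp
  finally show ?thesis .
qed

lemma log_weight_Suc_mono: "log_weight j k \<le> log_weight (Suc j) k"
  unfolding log_weight_def using one_le_ln_plus_3 by (simp add: power_increasing)

definition decay_witness :: "nat \<Rightarrow> ('d::finite \<Rightarrow> int) \<Rightarrow> complex" where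
  "decay_witness j y = complex_of_real (exp (- (ln (real_of_int (l1norm y) + 3) ^ Suc j)))"

lemma norm_decay_witness_axis_point:
  "cmod (decay_witness j (axis_point k)) = exp (- log_weight (Suc j) k)"
  by (simp add: decay_witness_def log_weight_def l1norm_axis_point)

lemma decay_witness_in_decay_ideal:
  assumes "U \<le> sequentially"
  shows "(decay_witness j :: ('d::finite \<Rightarrow> int) \<Rightarrow> complex) \<in> decay_ideal U axis_point (log_weight j)"
proof (rule decay_idealI)
  have "cmod (decay_witness j y) \<le> 1" for y :: "'d \<Rightarrow> int"
    using l1norm_nonneg[of y] by (simp add: decay_witness_def)
  then show "(decay_witness j :: ('d \<Rightarrow> int) \<Rightarrow> complex) \<in> tempered" by (rule tempered_bounded)
  fix c :: real
  have "eventually (\<lambda>k. exp c \<le> real k + 3) sequentially"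
    by (rule eventually_sequentiallyI[of "nat \<lceil>exp c\<rceil>"]) linarith
  then have "eventually (\<lambda>k. c \<le> ln (real k + 3)) U"
    by (rule filter_leD[OF assms, THEN eventually_mono]) (simp add: ln_ge_iff)
  then show "eventually (\<lambda>k. cmod (decay_witness j (axis_point k :: 'd \<Rightarrow> int)) \<le> exp (- c * log_weight j k)) U"
  proof eventually_elim
    case (elim k)
    then have "c * log_weight j k \<le> log_weight (Suc j) k"
      unfolding log_weight_def using one_le_ln_plus_3 by (simp add: mult_right_mono)
    then show ?case by (simp add: norm_decay_witness_axis_point)
  qed
qed

lemma decay_witness_notin_decay_ideal:
  assumes "U \<noteq> bot"
  shows "(decay_witness j :: ('d::finite \<Rightarrow> int) \<Rightarrow> complex) \<notin> decay_ideal U axis_point (log_weight (Suc j))"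
proof
  assume "(decay_witness j :: ('d \<Rightarrow> int) \<Rightarrow> complex) \<in> decay_ideal U axis_point (log_weight (Suc j))"
  from decay_ideal_eventually[OF this, of 2]
  have "eventually (\<lambda>k. log_weight (Suc j) k \<le> 0) U"
    by (simp add: norm_decay_witness_axis_point)
  then have "eventually (\<lambda>k. False) U"
  proof eventually_elim
    case (elim k)
    with log_weight_ge_1[of "Suc j" k] show False by simp
  qed
  with assms show False by simp
qed

theorem theorem4p4:
  fixes N :: nat
  shows "\<exists>p :: nat \<Rightarrow> ((('d::finite \<Rightarrow> int) \<Rightarrow> complex) set).
           (\<forall>i\<in>{1..N+1}. primeideal (p i) (S_ring :: (('d \<Rightarrow> int) \<Rightarrow> complex) ring)
                             \<and> p i \<noteq> carrier (S_ring :: (('d \<Rightarrow> int) \<Rightarrow> complex) ring))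
         \<and> (\<forall>i\<in>{1..N}. p (Suc i) \<subset> p i)"
proof -
  obtain U :: "nat filter" where U: "U \<le> sequentially" "ultrafilter U"
    using ultrafilter_exists[of sequentially] by auto
  define p :: "nat \<Rightarrow> (('d \<Rightarrow> int) \<Rightarrow> complex) set"
    where "p j = decay_ideal U axis_point (log_weight j)" for j
  have prime: "primeideal (p j) S_ring" if "1 \<le> j" for j
    unfolding p_def
    using U(2) log_weight_ge_1 ln_norm_axis_point_le_log_weight[OF that] by (rule decay_ideal_prime)
  have "p (Suc j) \<subset> p j" for j
  proof -
    have "p (Suc j) \<subseteq> p j"
      unfolding p_def by (rule decay_ideal_antimono) (rule log_weight_Suc_mono)
    moreover have "decay_witness j \<in> p j - p (Suc j)"
      using U decay_witness_in_decay_ideal decay_witness_notin_decay_ideal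
      unfolding p_def ultrafilter_def by blast
    ultimately show ?thesis by blast
  qed
  then show ?thesis
    using prime primeideal.I_notcarr by (intro exI[of _ p]) fastforce
qed

end
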